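(* Let $A,B\in\mathcal M_n$ be accretive with $W(A),W(B)\subset S_\alpha$ for some $0\le\alpha<\pi/2$, and let $f\in\mathfrak m$. Then $$\Re(A\sigma_fB)\le\sec^2(\alpha)\,(\Re A)\,\sigma_f\,(\Re B).$$
   Context: A matrix $A$ is accretive if $\Re A=\frac{A+A^*}{2}$ is positive definite. $W(A)$ is the numerical range, $S_\alpha=\{z:\Re z>0,\ |\Im z|\le\tan(\alpha)\Re z\}$. $\le$ is the Löwner order. $\mathfrak m$ is the set of matrix monotone $f:(0,\infty)\to(0,\infty)$ with $f(1)=1$; each has a unique probability measure $\nu_f$ on $[0,1]$ with $f(x)=\int_0^1((1-t)+tx^{-1})^{-1}d\nu_f(t)$, $x>0$. For accretive $A,B$: $A!_tB=((1-t)A^{-1}+tB^{-1})^{-1}$ and $A\sigma_fB:=\int_0^1A!_tB\,d\nu_f(t)$. *)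

theory Defs
  imports "HOL-Analysis.Analysis" "HOL-Probability.Probability"
begin

type_synonym 'n cmat = "complex^'n^'n"

definition cadj :: "'n::finite cmat \<Rightarrow> 'n cmat" where
  "cadj A = (\<chi> i j. cnj (A $ j $ i))"

definition hpart :: "'n::finite cmat \<Rightarrow> 'n cmat" where
  "hpart A = (1/2) *\<^sub>R (A + cadj A)"

definition hermitian :: "'n::finite cmat \<Rightarrow> bool" where
  "hermitian A \<longleftrightarrow> cadj A = A"

definition qform :: "'n::finite cmat \<Rightarrow> complex^'n \<Rightarrow> complex" where
  "qform A x = (\<Sum>i\<in>UNIV. cnj (x $ i) * (A *v x) $ i)"

definition pos_def :: "'n::finite cmat \<Rightarrow> bool" where
  "pos_def A \<longleftrightarrow> hermitian A \<and> (\<forall>x. x \<noteq> 0 \<longrightarrow> Re (qform A x) > 0)"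

definition pos_semidef :: "'n::finite cmat \<Rightarrow> bool" where
  "pos_semidef A \<longleftrightarrow> hermitian A \<and> (\<forall>x. Re (qform A x) \<ge> 0)"

definition loewner_le :: "'n::finite cmat \<Rightarrow> 'n cmat \<Rightarrow> bool" where
  "loewner_le X Y \<longleftrightarrow> pos_semidef (Y - X)"

definition accretive :: "'n::finite cmat \<Rightarrow> bool" where
  "accretive A \<longleftrightarrow> pos_def (hpart A)"

definition num_range :: "'n::finite cmat \<Rightarrow> complex set" where
  "num_range A = {qform A x | x. norm x = 1}"

definition sector :: "real \<Rightarrow> complex set" where
  "sector \<alpha> = {z. Re z > 0 \<and> \<bar>Im z\<bar> \<le> tan \<alpha> * Re z}"

definition wharm :: "'n::finite cmat \<Rightarrow> real \<Rightarrow> 'n cmat \<Rightarrow> 'n cmat" where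
  "wharm A t B = matrix_inv ((1 - t) *\<^sub>R matrix_inv A + t *\<^sub>R matrix_inv B)"

text \<open>A sigma_f B, where nu is the representing probability measure of f\<close>
definition mat_mean :: "real measure \<Rightarrow> 'n::finite cmat \<Rightarrow> 'n cmat \<Rightarrow> 'n cmat" where
  "mat_mean \<nu> A B = integral\<^sup>L \<nu> (\<lambda>t. wharm A t B)"

section \<open>Matrix monotone functions (all dimensions; matrices as nat-indexed arrays)\<close>

definition unitary_n :: "nat \<Rightarrow> (nat \<Rightarrow> nat \<Rightarrow> complex) \<Rightarrow> bool" where
  "unitary_n n U \<longleftrightarrow>
     (\<forall>i<n. \<forall>j<n. (\<Sum>k<n. cnj (U k i) * U k j) = (if i = j then 1 else 0))"

definition spec_mat :: "nat \<Rightarrow> (nat \<Rightarrow> nat \<Rightarrow> complex) \<Rightarrow> (nat \<Rightarrow> real) \<Rightarrow> nat \<Rightarrow> nat \<Rightarrow> complex" where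
  "spec_mat n U d = (\<lambda>i j. \<Sum>k<n. U i k * complex_of_real (d k) * cnj (U j k))"

definition loewner_le_n :: "nat \<Rightarrow> (nat \<Rightarrow> nat \<Rightarrow> complex) \<Rightarrow> (nat \<Rightarrow> nat \<Rightarrow> complex) \<Rightarrow> bool" where
  "loewner_le_n n X Y \<longleftrightarrow>
     (\<forall>i<n. \<forall>j<n. X i j = cnj (X j i) \<and> Y i j = cnj (Y j i)) \<and>
     (\<forall>v. Re (\<Sum>i<n. \<Sum>j<n. cnj (v i) * (Y i j - X i j) * v j) \<ge> 0)"

text \<open>f is matrix monotone on positive definite matrices of every size:
  f(A) for positive definite A = U diag(d) U^* is U diag(f o d) U^*.\<close>
definition matrix_monotone :: "(real \<Rightarrow> real) \<Rightarrow> bool" where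
  "matrix_monotone f \<longleftrightarrow>
    (\<forall>n U V d e. unitary_n n U \<and> unitary_n n V \<and> (\<forall>k<n. d k > 0 \<and> e k > 0) \<and>
        loewner_le_n n (spec_mat n U d) (spec_mat n V e) \<longrightarrow>
        loewner_le_n n (spec_mat n U (f \<circ> d)) (spec_mat n V (f \<circ> e)))"

definition class_m :: "(real \<Rightarrow> real) set" where
  "class_m = {f. matrix_monotone f \<and> (\<forall>x>0. f x > 0) \<and> f 1 = 1}"

definition represents :: "real measure \<Rightarrow> (real \<Rightarrow> real) \<Rightarrow> bool" where
  "represents \<nu> f \<longleftrightarrow> prob_space \<nu> \<and> sets \<nu> = sets (restrict_space borel {0..1}) \<and>
     (\<forall>x>0. f x = (\<integral>t. inverse ((1 - t) + t * inverse x) \<partial>\<nu>))"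

end

theory Submission
  imports Defs
begin

text \<open>Since \<open>\<sigma>\<^sub>f\<close> is an average of the weighted harmonic means \<open>!\<^sub>\<tau>\<close>, it suffices to prove
  \<open>\<Re>(A !\<^sub>\<tau> B) \<le> sec\<^sup>2\<alpha> (\<Re>A) !\<^sub>\<tau> (\<Re>B)\<close> for each \<open>\<tau>\<close>.
  For accretive \<open>X\<close> with \<open>W(X) \<subseteq> S\<^sub>\<alpha>\<close>, the forms \<open>(1 \<mp> \<i> cot \<alpha>) X\<close> have nonnegative real part,
  and the AM-GM inequality for them gives
  \<open>2 Re \<langle>y, X w\<rangle> \<le> \<langle>y, (\<Re>X) y\<rangle> + sec\<^sup>2\<alpha> \<langle>w, (\<Re>X) w\<rangle>\<close>; taking \<open>y = (\<Re>X)\<inverse> z\<close>, \<open>w = X\<inverse> z\<close>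
  yields \<open>(\<Re>X)\<inverse> \<le> sec\<^sup>2\<alpha> \<Re>(X\<inverse>)\<close>. Averaging over \<open>X = A, B\<close> gives \<open>D \<le> sec\<^sup>2\<alpha> \<Re>C\<close> for
  \<open>C = (1-\<tau>)A\<inverse> + \<tau>B\<inverse>\<close>, \<open>D = (1-\<tau>)(\<Re>A)\<inverse> + \<tau>(\<Re>B)\<inverse>\<close>, and this order reverses under inversion
  because \<open>\<langle>x, D\<inverse> x\<rangle> = max\<^sub>v (2 Re \<langle>x, v\<rangle> - \<langle>v, D v\<rangle>)\<close>, tested at \<open>v = C\<inverse> x / sec\<^sup>2\<alpha>\<close>.\<close>

definition cinner :: "complex^'n::finite \<Rightarrow> complex^'n \<Rightarrow> complex" where
  "cinner x y = (\<Sum>i\<in>UNIV. cnj (x $ i) * y $ i)"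

lemma qform_eq_cinner: "qform A x = cinner x (A *v x)"
  by (simp add: qform_def cinner_def)

lemma cinner_commute: "cinner y x = cnj (cinner x y)"
  by (simp add: cinner_def mult.commute)

lemma cinner_adjoint: "cinner x (M *v y) = cinner (cadj M *v x) y"
proof -
  have "cinner x (M *v y) = (\<Sum>i\<in>UNIV. \<Sum>j\<in>UNIV. cnj (x$i) * M$i$j * y$j)"
    by (simp add: cinner_def matrix_vector_mult_def sum_distrib_left mult.assoc)
  also have "\<dots> = (\<Sum>j\<in>UNIV. \<Sum>i\<in>UNIV. cnj (x$i) * M$i$j * y$j)"
    by (rule sum.swap)
  also have "\<dots> = cinner (cadj M *v x) y"
    by (simp add: cinner_def matrix_vector_mult_def cadj_def sum_distrib_left sum_distrib_right mult_ac)
  finally show ?thesis .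
qed

lemma cinner_diff_left: "cinner (y - z) x = cinner y x - cinner z x"
  by (simp add: cinner_def left_diff_distrib sum_subtractf)

lemma cinner_diff_right: "cinner x (y - z) = cinner x y - cinner x z"
  by (simp add: cinner_def right_diff_distrib sum_subtractf)

lemma cinner_smult_left: "cinner (c *s y) x = cnj c * cinner y x"
  by (simp add: cinner_def sum_distrib_left mult.assoc)

lemma cinner_smult_right: "cinner x (c *s y) = c * cinner x y"
  by (simp add: cinner_def sum_distrib_left mult.left_commute)

lemma matrix_vector_mult_smult: "(M::complex^'n::finite^'n) *v (c *s x) = c *s (M *v x)"
  by (simp add: vec.scale)

lemma cadj_cadj [simp]: "cadj (cadj M) = M"
  by (simp add: cadj_def vec_eq_iff)

lemma cadj_add: "cadj (A + B) = cadj A + cadj B"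
  by (simp add: cadj_def vec_eq_iff)

lemma cadj_diff: "cadj (A - B) = cadj A - cadj B"
  by (simp add: cadj_def vec_eq_iff)

lemma cadj_scaleR: "cadj (r *\<^sub>R A) = r *\<^sub>R cadj A"
  by (simp add: cadj_def vec_eq_iff)

lemma cadj_mult: "cadj ((A::complex^'n::finite^'n) ** B) = cadj B ** cadj A"
  by (simp add: cadj_def matrix_matrix_mult_def vec_eq_iff mult.commute)

lemma cadj_mat_1: "cadj (mat 1 :: complex^'n::finite^'n) = mat 1"
  by (simp add: cadj_def mat_def vec_eq_iff)

lemma hermitian_hpart: "hermitian (hpart M)"
  by (simp add: hermitian_def hpart_def cadj_def vec_eq_iff)

lemma qform_zero [simp]: "qform M 0 = 0"
  by (simp add: qform_def)

lemma qform_add: "qform (A + B) x = qform A x + qform B x"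
  by (simp add: qform_eq_cinner matrix_vector_mult_add_rdistrib cinner_def distrib_left sum.distrib)

lemma qform_diff: "qform (A - B) x = qform A x - qform B x"
  by (simp add: qform_eq_cinner matrix_vector_mult_diff_rdistrib cinner_diff_right)

lemma qform_scaleR: "qform (c *\<^sub>R A) x = of_real c * qform A x"
  by (simp add: qform_def matrix_vector_mult_def sum_distrib_left mult_ac scaleR_conv_of_real[symmetric])

lemma qform_smult: "qform X (d *s y) = cnj d * d * qform X y"
  by (simp add: qform_eq_cinner matrix_vector_mult_smult cinner_smult_left cinner_smult_right)

lemma qform_scaleR_vec: "qform M (r *\<^sub>R x) = of_real (r\<^sup>2) * qform M x"
  unfolding qform_def matrix_vector_mult_def vec_lambda_beta vector_scaleR_component
  by (simp add: sum_distrib_left scaleR_conv_of_real power2_eq_square mult_ac)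

lemma qform_cadj: "qform (cadj M) x = cnj (qform M x)"
  by (simp add: qform_eq_cinner cinner_adjoint[of x "cadj M"] cinner_commute[of "M *v x"])

lemma qform_hpart: "qform (hpart M) x = of_real (Re (qform M x))"
  by (simp add: hpart_def qform_scaleR qform_add qform_cadj complex_eq_iff)

lemma qform_diff_vec:
  "qform X (p - q) = qform X p - cinner p (X *v q) - cinner q (X *v p) + qform X q"
  by (simp add: qform_eq_cinner matrix_vector_mult_diff_distrib cinner_diff_left cinner_diff_right)

lemma loewner_le_iff_Re_qform:
  assumes "hermitian X" "hermitian Y"
  shows "loewner_le X Y \<longleftrightarrow> (\<forall>x. Re (qform X x) \<le> Re (qform Y x))"
  using assms by (simp add: loewner_le_def pos_semidef_def hermitian_def cadj_diff qform_diff)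

lemma matrix_inv_cancel:
  assumes "invertible (M::complex^'n::finite^'n)"
  shows "M ** matrix_inv M = mat 1" "matrix_inv M ** M = mat 1"
    "M *v (matrix_inv M *v x) = x" "matrix_inv M *v (M *v x) = x"
  using someI_ex[OF assms[unfolded invertible_def]]
  by (auto simp: matrix_inv_def matrix_vector_mul_assoc)

lemma qform_matrix_inv:
  assumes "invertible M"
  shows "qform (matrix_inv M) x = cnj (qform M (matrix_inv M *v x))"
  by (simp add: qform_eq_cinner matrix_inv_cancel[OF assms] cinner_commute[of x "matrix_inv M *v x"])

lemma hermitian_matrix_inv:
  assumes "invertible (H::complex^'n::finite^'n)" "hermitian H"
  shows "hermitian (matrix_inv H)"
proof -
  have left_inv: "cadj (matrix_inv H) ** H = mat 1"
    using assms by (metis cadj_mat_1 cadj_mult hermitian_def matrix_inv_cancel(1))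
  have "cadj (matrix_inv H) = cadj (matrix_inv H) ** (H ** matrix_inv H)"
    by (simp add: matrix_inv_cancel[OF assms(1)])
  also have "\<dots> = matrix_inv H"
    by (simp add: matrix_mul_assoc left_inv)
  finally show ?thesis by (simp add: hermitian_def)
qed

lemma accretive_iff: "accretive M \<longleftrightarrow> (\<forall>x. x \<noteq> 0 \<longrightarrow> 0 < Re (qform M x))"
  by (simp add: accretive_def pos_def_def hermitian_hpart qform_hpart)

lemma accretive_hpart_iff: "accretive (hpart M) \<longleftrightarrow> accretive M"
  by (simp add: accretive_iff qform_hpart)

lemma accretive_Re_qform_nonneg: "accretive M \<Longrightarrow> 0 \<le> Re (qform M x)"
  by (cases "x = 0") (auto simp: accretive_iff less_imp_le)

lemma accretive_imp_invertible:
  fixes M :: "complex^'n::finite^'n"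
  assumes "accretive M"
  shows "invertible M"
proof -
  have inj: "inj ((*v) M)"
  proof (rule injI)
    fix a b assume "M *v a = M *v b"
    then have "qform M (a - b) = 0"
      by (simp add: qform_eq_cinner cinner_def matrix_vector_mult_diff_distrib)
    then show "a = b" using assms by (metis accretive_iff eq_iff_diff_eq_0 less_irrefl zero_complex.sel(1))
  qed
  then have "surj ((*v) M)"
    by (rule vec.linear_inj_imp_surj[OF matrix_vector_mul_linear_gen])
  with inj show ?thesis by (simp add: invertible_eq_bij bij_def)
qed

lemma accretive_matrix_inv:
  assumes "accretive M"
  shows "accretive (matrix_inv M)"
  unfolding accretive_iff
proof (intro allI impI)
  fix x :: "complex^'a" assume "x \<noteq> 0"
  note inv = accretive_imp_invertible[OF assms]
  then have "matrix_inv M *v x \<noteq> 0" using \<open>x \<noteq> 0\<close> by (metis matrix_inv_cancel(3) matrix_vector_mult_0_right)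
  then show "0 < Re (qform (matrix_inv M) x)"
    using assms by (simp add: qform_matrix_inv[OF inv] accretive_iff)
qed

lemma accretive_convex_comb:
  assumes "accretive P" "accretive Q" "0 \<le> \<tau>" "\<tau> \<le> 1"
  shows "accretive ((1 - \<tau>) *\<^sub>R P + \<tau> *\<^sub>R Q)"
  unfolding accretive_iff
proof (intro allI impI)
  fix x :: "complex^'a" assume "x \<noteq> 0"
  then have "0 < Re (qform P x)" "0 < Re (qform Q x)" using assms(1,2) by (auto simp: accretive_iff)
  then have "0 < (1 - \<tau>) * Re (qform P x) + \<tau> * Re (qform Q x)"
    using assms(3,4) by (cases "\<tau> = 1") (auto intro: add_pos_nonneg)
  then show "0 < Re (qform ((1 - \<tau>) *\<^sub>R P + \<tau> *\<^sub>R Q) x)"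
    by (simp add: qform_add qform_scaleR)
qed

lemma accretive_inverse_comb:
  assumes "accretive A" "accretive B" "0 \<le> \<tau>" "\<tau> \<le> 1"
  shows "accretive ((1 - \<tau>) *\<^sub>R matrix_inv A + \<tau> *\<^sub>R matrix_inv B)"
  using assms by (intro accretive_convex_comb accretive_matrix_inv)

lemma hermitian_wharm:
  assumes "accretive A" "accretive B" "hermitian A" "hermitian B" "0 \<le> \<tau>" "\<tau> \<le> 1"
  shows "hermitian (wharm A \<tau> B)"
proof -
  have "hermitian (matrix_inv A)" "hermitian (matrix_inv B)"
    using assms(1-4) by (simp_all add: hermitian_matrix_inv accretive_imp_invertible)
  then have "hermitian ((1 - \<tau>) *\<^sub>R matrix_inv A + \<tau> *\<^sub>R matrix_inv B)"
    by (simp add: hermitian_def cadj_add cadj_scaleR)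
  then show ?thesis
    unfolding wharm_def
    by (intro hermitian_matrix_inv accretive_imp_invertible accretive_inverse_comb assms)
qed

lemma num_range_sector_bound:
  assumes "num_range X \<subseteq> sector \<alpha>"
  shows "\<bar>Im (qform X x)\<bar> \<le> tan \<alpha> * Re (qform X x)"
proof (cases "x = 0")
  case False
  define r where "r = 1 / norm x"
  have "norm (r *\<^sub>R x) = 1" using False by (simp add: r_def)
  then have "qform X (r *\<^sub>R x) \<in> sector \<alpha>" using assms unfolding num_range_def by blast
  then have "r\<^sup>2 * \<bar>Im (qform X x)\<bar> \<le> r\<^sup>2 * (tan \<alpha> * Re (qform X x))"
    by (simp add: sector_def qform_scaleR_vec abs_mult mult_ac)
  moreover have "0 < r\<^sup>2" using False by (simp add: r_def)
  ultimately show ?thesis by simp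
qed simp

lemma form_am_gm:
  assumes "\<forall>w. 0 \<le> Re (c * qform X w)"
  shows "Re (c * cinner p (X *v q)) + Re (c * cinner q (X *v p)) \<le> Re (c * qform X p) + Re (c * qform X q)"
  using assms[rule_format, of "p - q"] by (simp add: qform_diff_vec algebra_simps)

text \<open>For \<open>t > 0\<close> the sector condition says that the forms \<open>(1 \<mp> \<i>/t) X\<close> have nonnegative
  real part; \<open>form_am_gm\<close> for them, with \<open>q = (1 \<pm> \<i> t) w\<close>, adds up to the claim.\<close>
lemma sector_cauchy_schwarz:
  assumes sector: "\<forall>w. \<bar>Im (qform X w)\<bar> \<le> t * Re (qform X w)" and "0 \<le> t" and "accretive X"
  shows "2 * Re (cinner y (X *v w)) \<le> Re (qform X y) + (1 + t\<^sup>2) * Re (qform X w)"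
proof (cases "t = 0")
  case True
  then have real: "Im (qform X v) = 0" for v
    using sector by simp
  have "\<forall>w. 0 \<le> Re (1 * qform X w)" "\<forall>w. 0 \<le> Re (- \<i> * qform X w)"
    using real accretive_Re_qform_nonneg[OF \<open>accretive X\<close>] by simp_all
  note form_am_gm[OF this(1), of y w]
    form_am_gm[OF this(2), of y "\<i> *s w", unfolded matrix_vector_mult_smult cinner_smult_left
      cinner_smult_right qform_smult]
  then show ?thesis
    using real True by simp
next
  case False
  with \<open>0 \<le> t\<close> have "0 < t" by simp
  have "0 \<le> Re ((1 - \<i> / t) * qform X v) \<and> 0 \<le> Re ((1 + \<i> / t) * qform X v)" for v
    using sector[rule_format, of v] \<open>0 < t\<close> by (simp add: field_simps abs_le_iff)
  then have pos_minus: "\<forall>w. 0 \<le> Re ((1 - \<i> / t) * qform X w)"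
    and pos_plus: "\<forall>w. 0 \<le> Re ((1 + \<i> / t) * qform X w)"
    by simp_all
  note smult_simps = matrix_vector_mult_smult cinner_smult_left cinner_smult_right qform_smult
  note form_am_gm[OF pos_minus, of y "(1 + \<i> * t) *s w", unfolded smult_simps]
    form_am_gm[OF pos_plus, of y "(1 - \<i> * t) *s w", unfolded smult_simps]
  then have "t ^ 4 * (2 * Re (cinner y (X *v w))) \<le> t ^ 4 * (Re (qform X y) + (1 + t\<^sup>2) * Re (qform X w))"
    using \<open>0 < t\<close> by (simp add: field_simps power2_eq_square eval_nat_numeral)
  then show ?thesis
    using \<open>0 < t\<close> by simp
qed

lemma Re_qform_matrix_inv_hpart_le:
  assumes "accretive X" and sector: "\<forall>w. \<bar>Im (qform X w)\<bar> \<le> t * Re (qform X w)" and "0 \<le> t"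
  shows "Re (qform (matrix_inv (hpart X)) z) \<le> (1 + t\<^sup>2) * Re (qform (matrix_inv X) z)"
proof -
  have inv: "invertible X" "invertible (hpart X)"
    using assms(1) by (simp_all add: accretive_imp_invertible accretive_hpart_iff)
  define y where "y = matrix_inv (hpart X) *v z"
  define w where "w = matrix_inv X *v z"
  have "Re (qform (matrix_inv (hpart X)) z) = Re (qform X y)"
    by (simp add: qform_matrix_inv[OF inv(2)] qform_hpart y_def)
  moreover have "Re (qform (matrix_inv (hpart X)) z) = Re (cinner y (X *v w))"
    by (simp add: qform_eq_cinner cinner_commute[of z] w_def y_def matrix_inv_cancel[OF inv(1)])
  moreover have "Re (qform (matrix_inv X) z) = Re (qform X w)"
    by (simp add: qform_matrix_inv[OF inv(1)] w_def)
  ultimately show ?thesis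
    using sector_cauchy_schwarz[OF sector \<open>0 \<le> t\<close> \<open>accretive X\<close>, of y w] by simp
qed

text \<open>Equality holds at \<open>v = D\<inverse> x\<close>.\<close>
lemma Re_qform_matrix_inv_variational:
  assumes "hermitian D" "accretive D"
  shows "2 * Re (cinner x v) - Re (qform D v) \<le> Re (qform (matrix_inv D) x)"
proof -
  have inv: "invertible D" using assms(2) by (rule accretive_imp_invertible)
  define u where "u = matrix_inv D *v x"
  have Du: "D *v u = x" by (simp add: u_def matrix_inv_cancel[OF inv])
  have "qform D (v - u) = qform D v - cnj (cinner x v) - cinner x v + cnj (qform (matrix_inv D) x)"
    using \<open>hermitian D\<close>
    by (simp add: qform_diff_vec Du cinner_commute[of v] cinner_adjoint[of u D v] hermitian_def
        qform_matrix_inv[OF inv] qform_eq_cinner[of D u] u_def[symmetric])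
  then show ?thesis
    using accretive_Re_qform_nonneg[OF assms(2), of "v - u"] by simp
qed

lemma Re_qform_matrix_inv_antimono:
  assumes "invertible C" "hermitian D" "accretive D" "0 < s"
    and le: "\<forall>v. Re (qform D v) \<le> s * Re (qform C v)"
  shows "Re (qform (matrix_inv C) x) \<le> s * Re (qform (matrix_inv D) x)"
proof -
  define z where "z = matrix_inv C *v x"
  define r where "r = Re (qform (matrix_inv C) x)"
  have r: "r = Re (qform C z)" "r = Re (cinner x z)"
    by (simp add: r_def z_def qform_matrix_inv[OF assms(1)]) (simp add: r_def z_def qform_eq_cinner)
  have "Re (qform D ((1 / s) *s z)) \<le> r / s"
    using le[rule_format, of z] \<open>0 < s\<close>
    by (simp add: qform_smult r power2_eq_square divide_simps mult.commute)
  moreover have "2 * Re (cinner x ((1 / s) *s z)) = 2 * r / s"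
    by (simp add: cinner_smult_right r(2))
  ultimately have "r / s \<le> Re (qform (matrix_inv D) x)"
    using Re_qform_matrix_inv_variational[OF assms(2,3), of x "(1 / s) *s z"] by linarith
  then show ?thesis
    using \<open>0 < s\<close> by (simp add: r_def divide_le_eq mult.commute)
qed

lemma Re_qform_wharm_le:
  assumes "accretive A" "accretive B"
    and sector_A: "\<forall>w. \<bar>Im (qform A w)\<bar> \<le> t * Re (qform A w)"
    and sector_B: "\<forall>w. \<bar>Im (qform B w)\<bar> \<le> t * Re (qform B w)"
    and "0 \<le> t" "0 \<le> \<tau>" "\<tau> \<le> 1"
  shows "Re (qform (wharm A \<tau> B) x) \<le> (1 + t\<^sup>2) * Re (qform (wharm (hpart A) \<tau> (hpart B)) x)"
  unfolding wharm_def
proof (rule Re_qform_matrix_inv_antimono)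
  let ?D = "(1 - \<tau>) *\<^sub>R matrix_inv (hpart A) + \<tau> *\<^sub>R matrix_inv (hpart B)"
  let ?C = "(1 - \<tau>) *\<^sub>R matrix_inv A + \<tau> *\<^sub>R matrix_inv B"
  have acc_hpart: "accretive (hpart A)" "accretive (hpart B)"
    using assms(1,2) by (simp_all add: accretive_hpart_iff)
  show "invertible ?C"
    using assms by (intro accretive_imp_invertible accretive_inverse_comb)
  show "accretive ?D"
    using acc_hpart assms(6,7) by (rule accretive_inverse_comb)
  have "hermitian (matrix_inv (hpart A))" "hermitian (matrix_inv (hpart B))"
    using acc_hpart by (simp_all add: hermitian_matrix_inv accretive_imp_invertible hermitian_hpart)
  then show "hermitian ?D"
    by (simp add: hermitian_def cadj_add cadj_scaleR)
  show "0 < 1 + t\<^sup>2"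
    by (simp add: add_pos_nonneg)
  show "\<forall>v. Re (qform ?D v) \<le> (1 + t\<^sup>2) * Re (qform ?C v)"
  proof
    fix v
    have "Re (qform ?D v) = (1 - \<tau>) * Re (qform (matrix_inv (hpart A)) v) + \<tau> * Re (qform (matrix_inv (hpart B)) v)"
      by (simp add: qform_add qform_scaleR)
    also have "\<dots> \<le> (1 - \<tau>) * ((1 + t\<^sup>2) * Re (qform (matrix_inv A) v)) + \<tau> * ((1 + t\<^sup>2) * Re (qform (matrix_inv B) v))"
      using Re_qform_matrix_inv_hpart_le[OF assms(1) sector_A \<open>0 \<le> t\<close>]
        Re_qform_matrix_inv_hpart_le[OF assms(2) sector_B \<open>0 \<le> t\<close>] assms(6,7)
      by (intro add_mono mult_left_mono) simp_all
    also have "\<dots> = (1 + t\<^sup>2) * Re (qform ?C v)"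
      unfolding qform_add qform_scaleR by (simp add: algebra_simps)
    finally show "Re (qform ?D v) \<le> (1 + t\<^sup>2) * Re (qform ?C v)" .
  qed
qed

lemma continuous_on_det:
  fixes F :: "real \<Rightarrow> complex^'n::finite^'n"
  assumes "continuous_on S F"
  shows "continuous_on S (\<lambda>t. det (F t))"
  unfolding det_def by (intro continuous_intros continuous_on_component assms)

lemma matrix_inv_component:
  fixes M :: "complex^'n::finite^'n"
  assumes "invertible M"
  shows "matrix_inv M $ i $ j = det (\<chi> a b. if b = i then axis j 1 $ a else M $ a $ b) / det M"
proof -
  have "det M \<noteq> 0" using assms by (simp add: invertible_det_nz)
  moreover have "M *v (matrix_inv M *v axis j 1) = axis j 1"
    by (simp add: matrix_inv_cancel[OF assms])
  ultimately have "matrix_inv M *v axis j 1 = (\<chi> k. det (\<chi> a b. if b = k then axis j 1 $ a else M $ a $ b) / det M)"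
    using cramer by blast
  moreover have "(matrix_inv M *v axis j 1) $ i = matrix_inv M $ i $ j"
    by (simp add: matrix_vector_mult_def axis_def if_distrib cong: if_cong)
  ultimately show ?thesis by simp
qed

lemma continuous_on_matrix_inv:
  fixes F :: "real \<Rightarrow> complex^'n::finite^'n"
  assumes F: "continuous_on S F" and inv: "\<forall>t\<in>S. invertible (F t)"
  shows "continuous_on S (\<lambda>t. matrix_inv (F t))"
proof -
  have entry: "continuous_on S (\<lambda>t. if b = i then axis j 1 $ a else F t $ a $ b)" for a b i j
    by (cases "b = i") (simp_all add: continuous_on_component F)
  have "continuous_on S (\<lambda>t. \<chi> i j. det (\<chi> a b. if b = i then axis j 1 $ a else F t $ a $ b) / det (F t))"
    using inv by (intro continuous_on_vec_lambda continuous_on_divide continuous_on_det entry F)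
      (auto simp: invertible_det_nz)
  moreover have "\<forall>t\<in>S. matrix_inv (F t) = (\<chi> i j. det (\<chi> a b. if b = i then axis j 1 $ a else F t $ a $ b) / det (F t))"
    using inv by (simp add: vec_eq_iff matrix_inv_component)
  ultimately show ?thesis
    using continuous_on_cong by (metis (no_types, lifting))
qed

lemma continuous_on_wharm:
  assumes "accretive A" "accretive B"
  shows "continuous_on {0..1} (\<lambda>\<tau>. wharm A \<tau> B)"
  unfolding wharm_def using assms
  by (intro continuous_on_matrix_inv continuous_intros ballI accretive_imp_invertible accretive_inverse_comb) auto

lemma represents_space: "represents \<nu> f \<Longrightarrow> space \<nu> = {0..1}"
  unfolding represents_def by (auto dest!: sets_eq_imp_space_eq simp: space_restrict_space)

lemma integrable_continuous_on_unit_interval: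
  fixes g :: "real \<Rightarrow> 'b::{banach,second_countable_topology}"
  assumes "finite_measure \<nu>" "sets \<nu> = sets (restrict_space borel {0..1})"
    and g: "continuous_on {0..1} g"
  shows "integrable \<nu> g"
proof -
  interpret finite_measure \<nu> by (rule assms(1))
  have "g \<in> borel_measurable \<nu>"
    using borel_measurable_continuous_on_restrict[OF g] measurable_cong_sets[OF assms(2) refl] by blast
  moreover obtain K where "\<forall>x\<in>{0..1}. norm (g x) \<le> K"
    using compact_imp_bounded[OF compact_continuous_image[OF g compact_Icc]] by (auto simp: bounded_iff)
  then have "AE x in \<nu>. norm (g x) \<le> K"
    using sets_eq_imp_space_eq[OF assms(2)] by (intro AE_I2) (auto simp: space_restrict_space)
  ultimately show ?thesis by (rule integrable_const_bound[rotated])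
qed

lemma integrable_wharm:
  assumes "represents \<nu> f" "accretive A" "accretive B"
  shows "integrable \<nu> (\<lambda>\<tau>. wharm A \<tau> B)"
  using assms(1) continuous_on_wharm[OF assms(2,3)]
  by (intro integrable_continuous_on_unit_interval) (auto simp: represents_def prob_space.finite_measure)

lemma bounded_linear_Re_qform: "bounded_linear (\<lambda>M::complex^'n::finite^'n. Re (qform M x))"
  by (simp add: linear_conv_bounded_linear[symmetric] linearI qform_add qform_scaleR)

lemma bounded_linear_cadj: "bounded_linear (cadj :: complex^'n::finite^'n \<Rightarrow> _)"
  by (simp add: linear_conv_bounded_linear[symmetric] linearI cadj_add cadj_scaleR)

lemma hermitian_integral:
  fixes F :: "'a \<Rightarrow> complex^'n::finite^'n"
  assumes "integrable M F" "\<forall>\<tau>\<in>space M. hermitian (F \<tau>)"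
  shows "hermitian (integral\<^sup>L M F)"
proof -
  have "cadj (integral\<^sup>L M F) = integral\<^sup>L M (\<lambda>\<tau>. cadj (F \<tau>))"
    by (rule integral_bounded_linear[OF bounded_linear_cadj assms(1), symmetric])
  also have "\<dots> = integral\<^sup>L M F"
    using assms(2) by (intro Bochner_Integration.integral_cong) (simp_all add: hermitian_def)
  finally show ?thesis by (simp add: hermitian_def)
qed

lemma Re_qform_integral_mono:
  fixes F G :: "'a \<Rightarrow> complex^'n::finite^'n"
  assumes "integrable M F" "integrable M G"
    and "\<forall>\<tau>\<in>space M. Re (qform (F \<tau>) x) \<le> c * Re (qform (G \<tau>) x)"
  shows "Re (qform (integral\<^sup>L M F) x) \<le> c * Re (qform (integral\<^sup>L M G) x)"
proof -
  note integral_Re_qform = integral_bounded_linear[OF bounded_linear_Re_qform, symmetric]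
  have "integral\<^sup>L M (\<lambda>\<tau>. Re (qform (F \<tau>) x)) \<le> integral\<^sup>L M (\<lambda>\<tau>. c * Re (qform (G \<tau>) x))"
    using assms by (intro integral_mono integrable_mult_right integrable_bounded_linear[OF bounded_linear_Re_qform]) auto
  then show ?thesis
    by (simp add: integral_Re_qform[OF assms(1)] integral_Re_qform[OF assms(2)])
qed

theorem mainTheorem8:
  fixes A B :: "complex^'n::finite^'n" and \<alpha> :: real and f :: "real \<Rightarrow> real" and \<nu> :: "real measure"
  assumes "accretive A" and "accretive B"
    and "0 \<le> \<alpha>" and "\<alpha> < pi / 2"
    and "num_range A \<subseteq> sector \<alpha>" and "num_range B \<subseteq> sector \<alpha>"
    and "f \<in> class_m" and "represents \<nu> f"
  shows "loewner_le (hpart (mat_mean \<nu> A B))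
           ((1 / (cos \<alpha>)\<^sup>2) *\<^sub>R mat_mean \<nu> (hpart A) (hpart B))"
proof -
  define t where "t = tan \<alpha>"
  have "0 \<le> t"
    using assms(3,4) tan_gt_zero[of \<alpha>] by (cases "\<alpha> = 0") (auto simp: t_def)
  have sec: "1 / (cos \<alpha>)\<^sup>2 = 1 + t\<^sup>2"
    using assms(3,4) cos_gt_zero_pi[of \<alpha>] by (simp add: t_def tan_sec power_inverse inverse_eq_divide power_one_over)
  have space: "space \<nu> = {0..1}"
    using assms(8) by (rule represents_space)
  have acc_hpart: "accretive (hpart A)" "accretive (hpart B)"
    using assms(1,2) by (simp_all add: accretive_hpart_iff)
  note wharm_le = Re_qform_wharm_le[OF assms(1,2) allI[OF num_range_sector_bound[OF assms(5)]]
      allI[OF num_range_sector_bound[OF assms(6)]], folded t_def, OF \<open>0 \<le> t\<close>]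
  have "Re (qform (mat_mean \<nu> A B) x) \<le> (1 + t\<^sup>2) * Re (qform (mat_mean \<nu> (hpart A) (hpart B)) x)" for x
    unfolding mat_mean_def using wharm_le
    by (intro Re_qform_integral_mono integrable_wharm[OF assms(8)] assms(1,2) acc_hpart) (simp add: space)
  moreover have "hermitian (mat_mean \<nu> (hpart A) (hpart B))"
    unfolding mat_mean_def using acc_hpart
    by (intro hermitian_integral integrable_wharm[OF assms(8)] ballI hermitian_wharm hermitian_hpart)
      (simp_all add: space)
  ultimately show ?thesis
    unfolding sec
    by (subst loewner_le_iff_Re_qform) (simp_all add: hermitian_hpart[unfolded hermitian_def] hermitian_def cadj_scaleR qform_hpart qform_scaleR)
qed

end
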